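(* For every integer $k \ge 1$ and every $\epsilon \in (0,1)$, the non-oblivious local search algorithm described in the context, run on any $k$-exchange system $\mathcal{I}$ over a ground set of size $n$ and any nonnegative monotone submodular $f$, terminates after $O(\epsilon^{-2}k^2 n^{k^2+4})$ time (counting oracle calls and arithmetic operations, for fixed $k$ in the $\epsilon$-dependence) and returns $S \in \mathcal{I}$ with $f(O) \le \bigl(\frac{k+3}{2} + \epsilon\bigr) f(S)$ for every $O \in \mathcal{I}$.
   Context: A $k$-exchange system is a nonempty downward-closed family $\mathcal{I} \subseteq 2^{\mathcal{G}}$ such that for all $A, B \in \mathcal{I}$ there is a collection $\{Y_e \subseteq B \setminus A : e \in A \setminus B\}$ with (K1) $|Y_e| \le k$; (K2) every $x \in B \setminus A$ lies in at most $k$ of the $Y_e$; (K3) for every $C \subseteq A \setminus B$, $(B \setminus \bigcup_{e \in C} Y_e) \cup C \in \mathcal{I}$. $f : 2^{\mathcal{G}} \to \mathbb{R}_{\ge 0}$ is monotone submodular, accessed via a value oracle; $\mathcal{I}$ via a membership oracle; all singletons are assumed independent. Algorithm. Let $S_{\mathrm{init}} = \{e^*\}$ with $e^* \in \arg\max_e f(\{e\})$, $\delta = (1 + \frac{k+3}{2\epsilon})^{-1}$, $\alpha = f(S_{\mathrm{init}})\delta/n$, $S \leftarrow S_{\mathrm{init}}$, $\prec$ an arbitrary total order on $\mathcal{G}$. Repeat: compute weights $w$ on $S$: with $S = \{s_1 \prec \dots \prec s_m\}$, $S_i = \{s_1,\dots,s_i\}$, $w(s_i) = \lfloor (f(S_{i-1}\cup\{s_i\})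 - f(S_{i-1}))/\alpha\rfloor\alpha$. Scan all $k$-replacements $(A,B)$ (pairs with $B \subseteq S$, $A \subseteq \mathcal{G}\setminus(S\setminus B)$, $|A|\le k$, $|B| \le k^2-k+1$, $(S\setminus B)\cup A \in \mathcal{I}$); for each, with $A = \{a_1 \prec\dots\prec a_r\}$, $A_i=\{a_1,\dots,a_i\}$, compute $w_{(A,B)}(a_i) = \lfloor (f((S\setminus B)\cup A_{i-1}\cup\{a_i\}) - f((S\setminus B)\cup A_{i-1}))/\alpha\rfloor\alpha$. If $\sum_{a\in A} w_{(A,B)}(a)^2 > \sum_{b \in B} w(b)^2$, replace $\prec$ by an order in which all elements of $S\setminus B$ precede those of $A$ and which otherwise keeps the relative order of $\prec$ on $(S \setminus B)\cup A$, set $S \leftarrow (S\setminus B)\cup A$, and start a new iteration. If no such $(A,B)$ exists, return $S$. *)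

theory Defs
  imports Complex_Main
begin

definition k_exchange_system :: "'a set \<Rightarrow> 'a set set \<Rightarrow> nat \<Rightarrow> bool" where
  "k_exchange_system G I k \<longleftrightarrow>
     I \<noteq> {} \<and> I \<subseteq> Pow G \<and>
     (\<forall>A\<in>I. \<forall>B. B \<subseteq> A \<longrightarrow> B \<in> I) \<and>
     (\<forall>A\<in>I. \<forall>B\<in>I. \<exists>Y :: 'a \<Rightarrow> 'a set.
        (\<forall>e\<in>A - B. Y e \<subseteq> B - A \<and> card (Y e) \<le> k) \<and>
        (\<forall>x\<in>B - A. card {e \<in> A - B. x \<in> Y e} \<le> k) \<and>
        (\<forall>C. C \<subseteq> A - B \<longrightarrow> (B - (\<Union>e\<in>C. Y e)) \<union> C \<in> I))"

definition monotone_submodular :: "'a set \<Rightarrow> ('a set \<Rightarrow> real) \<Rightarrow> bool" where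
  "monotone_submodular G f \<longleftrightarrow>
     (\<forall>X. X \<subseteq> G \<longrightarrow> f X \<ge> 0) \<and>
     (\<forall>X Y. X \<subseteq> Y \<and> Y \<subseteq> G \<longrightarrow> f X \<le> f Y) \<and>
     (\<forall>X Y. X \<subseteq> G \<and> Y \<subseteq> G \<longrightarrow> f (X \<union> Y) + f (X \<inter> Y) \<le> f X + f Y)"

text \<open>A total order on the ground set G is represented by a list enumerating G
  without repetitions; x precedes y iff x occurs strictly earlier.\<close>

definition is_order :: "'a set \<Rightarrow> 'a list \<Rightarrow> bool" where
  "is_order G xs \<longleftrightarrow> distinct xs \<and> set xs = G"

definition before :: "'a list \<Rightarrow> 'a \<Rightarrow> 'a \<Rightarrow> bool" where
  "before xs x y \<longleftrightarrow> (\<exists>i j. i < j \<and> j < length xs \<and> xs ! i = x \<and> xs ! j = y)"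

definition rnd :: "real \<Rightarrow> real \<Rightarrow> real" where
  "rnd \<alpha> v = of_int \<lfloor>v / \<alpha>\<rfloor> * \<alpha>"

fun wlist :: "('a set \<Rightarrow> real) \<Rightarrow> real \<Rightarrow> 'a set \<Rightarrow> 'a list \<Rightarrow> ('a \<times> real) list" where
  "wlist f \<alpha> T [] = []"
| "wlist f \<alpha> T (x # xs) = (x, rnd \<alpha> (f (insert x T) - f T)) # wlist f \<alpha> (insert x T) xs"

definition sqsum :: "('a \<times> real) list \<Rightarrow> 'a set \<Rightarrow> real" where
  "sqsum ws B = sum_list (map (\<lambda>(x, v). v ^ 2) (filter (\<lambda>(x, v). x \<in> B) ws))"

text \<open>Weights w on S (w.r.t. the current order xs): sum of w(b)^2 over b in B.\<close>
definition loss :: "('a set \<Rightarrow> real) \<Rightarrow> real \<Rightarrow> 'a set \<Rightarrow> 'a list \<Rightarrow> 'a set \<Rightarrow> real" where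
  "loss f \<alpha> S xs B = sqsum (wlist f \<alpha> {} (filter (\<lambda>x. x \<in> S) xs)) B"

text \<open>Weights w_(A,B) on A: sum of w_(A,B)(a)^2 over a in A.\<close>
definition gain :: "('a set \<Rightarrow> real) \<Rightarrow> real \<Rightarrow> 'a set \<Rightarrow> 'a list \<Rightarrow> 'a set \<Rightarrow> 'a set \<Rightarrow> real" where
  "gain f \<alpha> S xs A B = sqsum (wlist f \<alpha> (S - B) (filter (\<lambda>x. x \<in> A) xs)) A"

definition k_replacement :: "'a set \<Rightarrow> 'a set set \<Rightarrow> nat \<Rightarrow> 'a set \<Rightarrow> 'a set \<Rightarrow> 'a set \<Rightarrow> bool" where
  "k_replacement G I k S A B \<longleftrightarrow>
     B \<subseteq> S \<and> A \<subseteq> G - (S - B) \<and> card A \<le> k \<and> card B \<le> k ^ 2 - k + 1 \<and>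
     (S - B) \<union> A \<in> I"

definition reorder_ok :: "'a list \<Rightarrow> 'a list \<Rightarrow> 'a set \<Rightarrow> 'a set \<Rightarrow> bool" where
  "reorder_ok xs xs' P A \<longleftrightarrow>
     distinct xs' \<and> set xs' = set xs \<and>
     (\<forall>x\<in>P. \<forall>y\<in>A. before xs' x y) \<and>
     (\<forall>x\<in>P. \<forall>y\<in>P. before xs' x y \<longleftrightarrow> before xs x y) \<and>
     (\<forall>x\<in>A. \<forall>y\<in>A. before xs' x y \<longleftrightarrow> before xs x y)"

definition ls_step :: "'a set \<Rightarrow> 'a set set \<Rightarrow> ('a set \<Rightarrow> real) \<Rightarrow> nat \<Rightarrow> real \<Rightarrow>
    'a set \<times> 'a list \<Rightarrow> 'a set \<times> 'a list \<Rightarrow> bool" where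
  "ls_step G I f k \<alpha> st st' \<longleftrightarrow>
     (\<exists>A B. k_replacement G I k (fst st) A B \<and>
        gain f \<alpha> (fst st) (snd st) A B > loss f \<alpha> (fst st) (snd st) B \<and>
        fst st' = (fst st - B) \<union> A \<and>
        reorder_ok (snd st) (snd st') (fst st - B) A)"

definition ls_delta :: "nat \<Rightarrow> real \<Rightarrow> real" where
  "ls_delta k \<epsilon> = 1 / (1 + (real k + 3) / (2 * \<epsilon>))"

definition ls_alpha :: "'a set \<Rightarrow> ('a set \<Rightarrow> real) \<Rightarrow> nat \<Rightarrow> real \<Rightarrow> 'a \<Rightarrow> real" where
  "ls_alpha G f k \<epsilon> e0 = f {e0} * ls_delta k \<epsilon> / real (card G)"

text \<open>Candidate pairs scanned in one iteration (membership is checked for each).\<close>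
definition candidates :: "'a set \<Rightarrow> nat \<Rightarrow> 'a set \<Rightarrow> ('a set \<times> 'a set) set" where
  "candidates G k S = {(A, B). B \<subseteq> S \<and> A \<subseteq> G - (S - B) \<and> card A \<le> k \<and> card B \<le> k ^ 2 - k + 1}"

text \<open>Upper bound on oracle calls plus arithmetic operations of one full iteration:
  reordering (|G|), computing the weights on S (|S|+1 value calls), and for each
  candidate pair one membership call, |A|+1 value calls and O(|A|+|B|) arithmetic.
  An iteration is charged a full scan even if it stops at the first improvement.\<close>
definition iter_cost :: "'a set \<Rightarrow> nat \<Rightarrow> 'a set \<Rightarrow> nat" where
  "iter_cost G k S = card G + card S + 1 +
     (\<Sum>(A, B)\<in>candidates G k S. 2 * (card A + card B + 2))"

end

theory Submission
  imports Defs
begin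

text \<open>
  The analysis follows the potential-function argument for non-oblivious
  local search.  For a current solution S listed in the order xs, the weight w(x) of
  an element x of S is its marginal value over its predecessors in S, rounded down to
  a multiple of alpha; the potential of a state is the sum of the squared weights.

  Termination: every improving step raises the potential by at least alpha^2 (squared
  weights are integer multiples of alpha^2, the weights of kept elements only grow by
  submodularity, and the new elements carry exactly the gain), while the potential
  never exceeds |G| f(e0)^2.  With alpha = f(e0) delta / |G| this bounds the number of
  steps by |G|^3 / delta^2, and one step costs O(|G|^(k^2+1)) candidate pairs.

  Approximation: at a local optimum S and for any independent O, the k-exchange map Y
  yields, for every "star" of elements of O - S sharing a maximal-weight partner b in
  S, a legal replacement.  Local optimality and an AM-GM estimate give
  2 sum(u) <= (k+1) sum(w), where u are the rounded marginals of O - S added on top of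
  S.  Telescoping turns this into f(O) <= (k+3)/2 f(S) + delta f(e0), and the choice of
  delta absorbs the error term into epsilon f(S).
\<close>

lemma before_Nil [simp]: "\<not> before [] x y"
  by (simp add: before_def)

lemma before_Cons: "before (z # L) y x \<longleftrightarrow> (y = z \<and> x \<in> set L) \<or> before L y x"
proof
  assume "before (z # L) y x"
  then obtain i j where ij: "i < j" "j < length (z # L)" "(z # L) ! i = y" "(z # L) ! j = x"
    by (auto simp: before_def)
  show "(y = z \<and> x \<in> set L) \<or> before L y x"
  proof (cases i)
    case 0
    then show ?thesis using ij by (cases j) auto
  next
    case (Suc i')
    then obtain j' where "j = Suc j'" using ij by (cases j) auto
    then show ?thesis using ij Suc unfolding before_def by auto
  qed
next
  assume "(y = z \<and> x \<in> set L) \<or> before L y x"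
  then show "before (z # L) y x"
  proof
    assume "y = z \<and> x \<in> set L"
    then obtain j where "j < length L" "L ! j = x" "y = z" by (auto simp: in_set_conv_nth)
    then show ?thesis unfolding before_def by (intro exI[of _ 0] exI[of _ "Suc j"]) auto
  next
    assume "before L y x"
    then obtain i j where "i < j" "j < length L" "L ! i = y" "L ! j = x"
      by (auto simp: before_def)
    then show ?thesis unfolding before_def by (intro exI[of _ "Suc i"] exI[of _ "Suc j"]) auto
  qed
qed

lemma before_set: "before L y x \<Longrightarrow> y \<in> set L \<and> x \<in> set L"
  by (auto simp: before_def)

lemma before_append:
  "before (L1 @ L2) y x \<longleftrightarrow> before L1 y x \<or> (y \<in> set L1 \<and> x \<in> set L2) \<or> before L2 y x"
  by (induction L1) (auto simp: before_Cons)

lemma before_filter: "before (filter P L) y x \<longleftrightarrow> before L y x \<and> P y \<and> P x"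
  by (induction L) (auto simp: before_Cons dest: before_set)

lemma before_asym: "distinct L \<Longrightarrow> before L y x \<Longrightarrow> \<not> before L x y"
  by (induction L) (auto simp: before_Cons dest: before_set)

lemma before_irrefl: "distinct L \<Longrightarrow> \<not> before L x x"
  by (metis before_asym)

lemma reorder_exists:
  assumes d: "distinct xs" and PA: "P \<inter> A = {}" and As: "A \<subseteq> set xs" and Ps: "P \<subseteq> set xs"
  shows "reorder_ok xs (filter (\<lambda>x. x \<in> P) xs @ filter (\<lambda>x. x \<notin> P) xs) P A"
proof -
  let ?L1 = "filter (\<lambda>x. x \<in> P) xs" and ?L2 = "filter (\<lambda>x. x \<notin> P) xs"
  have "before (?L1 @ ?L2) x y" if "x \<in> P" "y \<in> A" for x y
    using that Ps As PA unfolding before_append by auto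
  moreover have "before (?L1 @ ?L2) x y \<longleftrightarrow> before xs x y" if "x \<in> P" "y \<in> P" for x y
    using that by (auto simp: before_append before_filter dest: before_set)
  moreover have "before (?L1 @ ?L2) x y \<longleftrightarrow> before xs x y" if "x \<in> A" "y \<in> A" for x y
    using that PA by (auto simp: before_append before_filter dest: before_set)
  moreover have "distinct (?L1 @ ?L2)" "set (?L1 @ ?L2) = set xs" using d by auto
  ultimately show ?thesis unfolding reorder_ok_def by blast
qed

lemma reorder_preds_kept:
  assumes ro: "reorder_ok xs xs' P A" and PA: "P \<inter> A = {}" and x: "x \<in> P"
  shows "{y \<in> P \<union> A. before xs' y x} = {y \<in> P. before xs y x}"
proof -
  have "\<not> before xs' y x" if "y \<in> A" for y
    using ro that x before_asym[of xs' x y] unfolding reorder_ok_def by blast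
  then show ?thesis using ro x PA unfolding reorder_ok_def by blast
qed

lemma reorder_preds_new:
  assumes ro: "reorder_ok xs xs' P A" and PA: "P \<inter> A = {}" and x: "x \<in> A"
  shows "{y \<in> P \<union> A. before xs' y x} = P \<union> {y \<in> A. before xs y x}"
  using ro x PA unfolding reorder_ok_def by blast

section \<open>Marginal values and rounded weights\<close>

definition marg :: "('a set \<Rightarrow> real) \<Rightarrow> 'a set \<Rightarrow> 'a \<Rightarrow> real" where
  "marg f X x = f (insert x X) - f X"

definition pre :: "'a list \<Rightarrow> 'a \<Rightarrow> 'a set" where
  "pre L x = {y. before L y x}"

text \<open>The rounded marginal value of a when the elements of D are added on top of T in
  the order xs.  The weights on the current solution S are the case T = {}, D = S.\<close>
definition ord_weight :: "('a set \<Rightarrow> real) \<Rightarrow> real \<Rightarrow> 'a set \<Rightarrow> 'a set \<Rightarrow> 'a list \<Rightarrow> 'a \<Rightarrow> real"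
  where "ord_weight f \<alpha> T D xs a = rnd \<alpha> (marg f (T \<union> {y \<in> D. before xs y a}) a)"

lemma pre_Cons_head: "distinct (z # L) \<Longrightarrow> pre (z # L) z = {}"
  by (auto simp: pre_def before_Cons dest: before_set)

lemma pre_Cons_tail: "x \<in> set L \<Longrightarrow> pre (z # L) x = insert z (pre L x)"
  by (auto simp: pre_def before_Cons)

lemma sqsum_Cons: "sqsum ((x, v) # ws) B = (if x \<in> B then v\<^sup>2 else 0) + sqsum ws B"
  by (simp add: sqsum_def)

lemma wlist_sqsum:
  "distinct L \<Longrightarrow>
   sqsum (wlist f \<alpha> T L) B = (\<Sum>x\<in>set L \<inter> B. (rnd \<alpha> (marg f (T \<union> pre L x) x))\<^sup>2)"
proof (induction L arbitrary: T)
  case Nil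
  then show ?case by (simp add: sqsum_def)
next
  case (Cons z L)
  have d: "distinct L" "z \<notin> set L" using Cons.prems by auto
  have tail: "(\<Sum>x\<in>set L \<inter> B. (rnd \<alpha> (marg f (insert z T \<union> pre L x) x))\<^sup>2)
      = (\<Sum>x\<in>set L \<inter> B. (rnd \<alpha> (marg f (T \<union> pre (z # L) x) x))\<^sup>2)"
    by (rule sum.cong) (auto simp: pre_Cons_tail)
  have head: "marg f (T \<union> pre (z # L) z) z = f (insert z T) - f T"
    using pre_Cons_head[OF Cons.prems] by (simp add: marg_def)
  have "set (z # L) \<inter> B = (if z \<in> B then insert z (set L \<inter> B) else set L \<inter> B)" by auto
  then show ?case using d Cons.IH[OF d(1), of "insert z T"] tail head by (simp add: sqsum_Cons)
qed

lemma marg_telescope: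
  "distinct L \<Longrightarrow> (\<Sum>x\<in>set L. marg f (T \<union> pre L x) x) = f (T \<union> set L) - f T"
proof (induction L arbitrary: T)
  case Nil
  then show ?case by simp
next
  case (Cons z L)
  have d: "distinct L" "z \<notin> set L" using Cons.prems by auto
  have "(\<Sum>x\<in>set L. marg f (T \<union> pre (z # L) x) x) = (\<Sum>x\<in>set L. marg f (insert z T \<union> pre L x) x)"
    by (rule sum.cong) (auto simp: pre_Cons_tail)
  moreover have "marg f (T \<union> pre (z # L) z) z = f (insert z T) - f T"
    using pre_Cons_head[OF Cons.prems] by (simp add: marg_def)
  ultimately show ?case using d Cons.IH[OF d(1), of "insert z T"] by simp
qed

lemma marg_telescope_ordered:
  assumes "distinct xs" "D \<subseteq> set xs"
  shows "(\<Sum>a\<in>D. marg f (T \<union> {y \<in> D. before xs y a}) a) = f (T \<union> D) - f T"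
proof -
  define L where "L = filter (\<lambda>x. x \<in> D) xs"
  have "set L = D" "distinct L" using assms by (auto simp: L_def)
  moreover have "pre L a = {y \<in> D. before xs y a}" if "a \<in> D" for a
    using that by (auto simp: L_def pre_def before_filter)
  ultimately show ?thesis using marg_telescope[of L f T] by (metis (no_types, lifting) sum.cong)
qed

lemma loss_eq:
  assumes "distinct xs" "S \<subseteq> set xs"
  shows "loss f \<alpha> S xs B = (\<Sum>x\<in>S \<inter> B. (ord_weight f \<alpha> {} S xs x)\<^sup>2)"
proof -
  let ?L = "filter (\<lambda>x. x \<in> S) xs"
  have "set ?L \<inter> B = S \<inter> B" using assms by auto
  then have "loss f \<alpha> S xs B = (\<Sum>x\<in>S \<inter> B. (rnd \<alpha> (marg f (pre ?L x) x))\<^sup>2)"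
    unfolding loss_def using assms by (simp add: wlist_sqsum)
  also have "\<dots> = (\<Sum>x\<in>S \<inter> B. (ord_weight f \<alpha> {} S xs x)\<^sup>2)"
    by (rule sum.cong) (simp_all add: ord_weight_def pre_def before_filter conj_commute)
  finally show ?thesis .
qed

lemma gain_eq:
  assumes "distinct xs" "A \<subseteq> set xs"
  shows "gain f \<alpha> S xs A B = (\<Sum>a\<in>A. (ord_weight f \<alpha> (S - B) A xs a)\<^sup>2)"
proof -
  have "set (filter (\<lambda>x. x \<in> A) xs) \<inter> A = A" using assms by auto
  moreover have "pre (filter (\<lambda>x. x \<in> A) xs) x = {y \<in> A. before xs y x}" if "x \<in> A" for x
    using that by (auto simp: pre_def before_filter)
  ultimately show ?thesis
    unfolding gain_def using assms by (simp add: wlist_sqsum ord_weight_def cong: sum.cong)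
qed

lemma rnd_zero [simp]: "rnd 0 v = 0"
  by (simp add: rnd_def)

lemma rnd_nonneg: "0 \<le> \<alpha> \<Longrightarrow> 0 \<le> v \<Longrightarrow> 0 \<le> rnd \<alpha> v"
  by (cases "\<alpha> = 0") (auto simp: rnd_def)

lemma rnd_le: "0 \<le> \<alpha> \<Longrightarrow> 0 \<le> v \<Longrightarrow> rnd \<alpha> v \<le> v"
proof (cases "\<alpha> = 0")
  case False
  assume "0 \<le> \<alpha>"
  then have "\<alpha> > 0" using False by simp
  have "of_int \<lfloor>v / \<alpha>\<rfloor> * \<alpha> \<le> v / \<alpha> * \<alpha>"
    by (rule mult_right_mono) (use \<open>\<alpha> > 0\<close> in simp_all)
  then show ?thesis using \<open>\<alpha> > 0\<close> by (simp add: rnd_def)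
qed simp

lemma rnd_ge: "0 < \<alpha> \<Longrightarrow> v - \<alpha> \<le> rnd \<alpha> v"
proof -
  assume a: "0 < \<alpha>"
  have "(v / \<alpha> - 1) * \<alpha> \<le> of_int \<lfloor>v / \<alpha>\<rfloor> * \<alpha>"
    by (rule mult_right_mono) (use a in linarith, use a in simp)
  then show ?thesis using a by (simp add: rnd_def algebra_simps)
qed

lemma rnd_mono: "0 \<le> \<alpha> \<Longrightarrow> v \<le> v' \<Longrightarrow> rnd \<alpha> v \<le> rnd \<alpha> v'"
proof (cases "\<alpha> = 0")
  case False
  assume a: "0 \<le> \<alpha>" "v \<le> v'"
  then have "\<alpha> > 0" using False by simp
  then have "\<lfloor>v / \<alpha>\<rfloor> \<le> \<lfloor>v' / \<alpha>\<rfloor>" using a by (intro floor_mono divide_right_mono) auto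
  then show ?thesis using \<open>\<alpha> > 0\<close> by (simp add: rnd_def)
qed simp

text \<open>Sums of squared rounded values are integer multiples of alpha^2, so a strict
  improvement of such a sum is an improvement by at least alpha^2.\<close>
lemma rounded_sq_sum_gap:
  fixes g h :: "'b \<Rightarrow> real"
  assumes lt: "(\<Sum>x\<in>B. (rnd \<alpha> (g x))\<^sup>2) < (\<Sum>x\<in>A. (rnd \<alpha> (h x))\<^sup>2)"
  shows "0 < \<alpha>\<^sup>2 \<and> (\<Sum>x\<in>B. (rnd \<alpha> (g x))\<^sup>2) + \<alpha>\<^sup>2 \<le> (\<Sum>x\<in>A. (rnd \<alpha> (h x))\<^sup>2)"
proof -
  have mult: "(\<Sum>x\<in>X. (rnd \<alpha> (q x))\<^sup>2) = \<alpha>\<^sup>2 * of_int (\<Sum>x\<in>X. \<lfloor>q x / \<alpha>\<rfloor>\<^sup>2)"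
    for X and q :: "'b \<Rightarrow> real"
    by (simp add: rnd_def power_mult_distrib sum_distrib_left mult.commute)
  define zB where "zB = (\<Sum>x\<in>B. \<lfloor>g x / \<alpha>\<rfloor>\<^sup>2)"
  define zA where "zA = (\<Sum>x\<in>A. \<lfloor>h x / \<alpha>\<rfloor>\<^sup>2)"
  have lt': "\<alpha>\<^sup>2 * of_int zB < \<alpha>\<^sup>2 * of_int zA" using lt by (simp add: mult zB_def zA_def)
  then have pos: "0 < \<alpha>\<^sup>2" by (cases "\<alpha> = 0") auto
  then have "zB < zA" using lt' by (simp add: mult_less_cancel_left)
  then have "\<alpha>\<^sup>2 * (of_int zB + 1) \<le> \<alpha>\<^sup>2 * of_int zA" using pos by (intro mult_left_mono) auto
  then show ?thesis using pos by (simp add: mult zB_def zA_def algebra_simps)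
qed

lemma ms_mono: "monotone_submodular G f \<Longrightarrow> X \<subseteq> Y \<Longrightarrow> Y \<subseteq> G \<Longrightarrow> f X \<le> f Y"
  unfolding monotone_submodular_def by blast

lemma ms_nonneg: "monotone_submodular G f \<Longrightarrow> X \<subseteq> G \<Longrightarrow> 0 \<le> f X"
  unfolding monotone_submodular_def by blast

lemma marg_nonneg:
  assumes "monotone_submodular G f" "X \<subseteq> G" "x \<in> G"
  shows "0 \<le> marg f X x"
proof -
  have "f X \<le> f (insert x X)" by (rule ms_mono[OF assms(1)]) (use assms in auto)
  then show ?thesis by (simp add: marg_def)
qed

lemma marg_antimono:
  assumes ms: "monotone_submodular G f" and "X \<subseteq> Y" "Y \<subseteq> G" "x \<in> G" "x \<notin> Y"
  shows "marg f Y x \<le> marg f X x"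
proof -
  have submod: "\<forall>X Y. X \<subseteq> G \<and> Y \<subseteq> G \<longrightarrow> f (X \<union> Y) + f (X \<inter> Y) \<le> f X + f Y"
    using ms unfolding monotone_submodular_def by blast
  have "insert x X \<subseteq> G" using assms by auto
  then have "f (insert x X \<union> Y) + f (insert x X \<inter> Y) \<le> f (insert x X) + f Y"
    using submod assms(3) by blast
  moreover have "insert x X \<union> Y = insert x Y" "insert x X \<inter> Y = X" using assms by auto
  ultimately show ?thesis by (simp add: marg_def)
qed

lemma marg_le_single:
  assumes "monotone_submodular G f" "X \<subseteq> G" "x \<in> G" "x \<notin> X"
  shows "marg f X x \<le> f {x} - f {}"
  using marg_antimono[OF assms(1) _ assms(2-4), of "{}"] by (simp add: marg_def)

lemma ord_weight_nonneg:
  assumes "monotone_submodular G f" "0 \<le> \<alpha>" "T \<subseteq> G" "D \<subseteq> G" "a \<in> G"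
  shows "0 \<le> ord_weight f \<alpha> T D xs a"
  unfolding ord_weight_def using assms by (intro rnd_nonneg marg_nonneg[of G]) auto

lemma ord_weight_antimono:
  assumes ms: "monotone_submodular G f" and "0 \<le> \<alpha>"
    and "X \<subseteq> T \<union> {y \<in> D. before xs y a}" "T \<subseteq> G" "D \<subseteq> G" "a \<in> G" "a \<notin> T"
    and "distinct xs"
  shows "ord_weight f \<alpha> T D xs a \<le> rnd \<alpha> (marg f X a)"
proof -
  have "a \<notin> T \<union> {y \<in> D. before xs y a}" using assms before_irrefl[of xs a] by blast
  moreover have "T \<union> {y \<in> D. before xs y a} \<subseteq> G" using assms by blast
  ultimately show ?thesis
    unfolding ord_weight_def by (intro rnd_mono assms marg_antimono[OF ms]) (use assms in auto)
qed

section \<open>The potential\<close>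

definition potential :: "('a set \<Rightarrow> real) \<Rightarrow> real \<Rightarrow> 'a set \<times> 'a list \<Rightarrow> real" where
  "potential f \<alpha> st = loss f \<alpha> (fst st) (snd st) (fst st)"

lemma potential_eq:
  "is_order G xs \<Longrightarrow> S \<subseteq> G \<Longrightarrow> potential f \<alpha> (S, xs) = (\<Sum>x\<in>S. (ord_weight f \<alpha> {} S xs x)\<^sup>2)"
  unfolding potential_def is_order_def by (simp add: loss_eq)

text \<open>Each weight is at most the value of the best singleton, so the potential is bounded.\<close>
lemma potential_bounds:
  assumes ms: "monotone_submodular G f" and al: "0 \<le> \<alpha>" and SG: "S \<subseteq> G"
    and fin: "finite G" and ord: "is_order G xs" and mx: "\<forall>e\<in>G. f {e} \<le> f0"
  shows "0 \<le> potential f \<alpha> (S, xs) \<and> potential f \<alpha> (S, xs) \<le> real (card G) * f0\<^sup>2"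
proof -
  have d: "distinct xs" using ord by (simp add: is_order_def)
  have fe: "0 \<le> f {}" using ms_nonneg[OF ms] by simp
  have sq: "(ord_weight f \<alpha> {} S xs x)\<^sup>2 \<le> f0\<^sup>2" if x: "x \<in> S" for x
  proof -
    have x_notin: "x \<notin> {y \<in> S. before xs y x}" using before_irrefl[OF d] by auto
    have "0 \<le> ord_weight f \<alpha> {} S xs x" by (rule ord_weight_nonneg[OF ms al]) (use x SG in auto)
    moreover have "ord_weight f \<alpha> {} S xs x \<le> f {x} - f {}"
      unfolding ord_weight_def using SG x x_notin
      by (intro order_trans[OF rnd_le[OF al] marg_le_single[OF ms]] marg_nonneg[OF ms]) auto
    ultimately show ?thesis using mx x SG fe by (intro power_mono) force+
  qed
  have "(\<Sum>x\<in>S. (ord_weight f \<alpha> {} S xs x)\<^sup>2) \<le> real (card S) * f0\<^sup>2"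
    using sum_bounded_above[of S _ "f0\<^sup>2"] sq by simp
  also have "\<dots> \<le> real (card G) * f0\<^sup>2" using card_mono[OF fin SG] by (intro mult_right_mono) auto
  finally show ?thesis using potential_eq[OF ord SG] by (simp add: sum_nonneg)
qed

text \<open>An improving step keeps independence and the order invariant and raises the
  potential by at least alpha^2: the new elements contribute exactly the gain, which beats
  the loss of the removed elements by alpha^2, and the kept elements lose predecessors.\<close>
lemma ls_step_potential:
  assumes ms: "monotone_submodular G f" and al: "0 \<le> \<alpha>" and IG: "I \<subseteq> Pow G"
    and SI: "S \<in> I" and ord: "is_order G xs"
    and st: "ls_step G I f k \<alpha> (S, xs) (S', xs')"
  shows "S' \<in> I \<and> is_order G xs' \<and> 0 < \<alpha> \<and>
         potential f \<alpha> (S, xs) + \<alpha>\<^sup>2 \<le> potential f \<alpha> (S', xs')"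
proof -
  obtain A B where kr: "k_replacement G I k S A B"
    and improves: "gain f \<alpha> S xs A B > loss f \<alpha> S xs B"
    and S': "S' = (S - B) \<union> A" and ro: "reorder_ok xs xs' (S - B) A"
    using st unfolding ls_step_def by auto
  define P where "P = S - B"
  have d: "distinct xs" and sx: "set xs = G" using ord by (auto simp: is_order_def)
  have SG: "S \<subseteq> G" using SI IG by auto
  have BS: "B \<subseteq> S" and AG: "A \<subseteq> G - P" and S'I: "S' \<in> I"
    using kr S' unfolding k_replacement_def P_def by auto
  have PA: "P \<inter> A = {}" using AG by auto
  have ord': "is_order G xs'" using ro sx unfolding reorder_ok_def is_order_def by auto
  have fin: "finite A" "finite P" "finite B"
    using AG SG BS sx by (auto simp: P_def intro: finite_subset)
  let ?w = "ord_weight f \<alpha> {} S xs" and ?w' = "ord_weight f \<alpha> {} S' xs'"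
  have gain: "gain f \<alpha> S xs A B = (\<Sum>a\<in>A. (ord_weight f \<alpha> P A xs a)\<^sup>2)"
    unfolding P_def using AG sx by (intro gain_eq d) auto
  have loss: "loss f \<alpha> S xs B = (\<Sum>x\<in>B. (?w x)\<^sup>2)"
    using loss_eq[OF d, of S] SG sx BS by (simp add: Int_absorb1)
  have gap: "0 < \<alpha>\<^sup>2 \<and> loss f \<alpha> S xs B + \<alpha>\<^sup>2 \<le> gain f \<alpha> S xs A B"
    unfolding gain loss ord_weight_def
    by (rule rounded_sq_sum_gap) (use improves in \<open>simp add: gain loss ord_weight_def\<close>)
  have new: "?w' a = ord_weight f \<alpha> P A xs a" if "a \<in> A" for a
    using reorder_preds_new[OF ro[folded P_def] PA that]
    by (simp add: ord_weight_def S' P_def[symmetric])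
  have kept: "?w x \<le> ?w' x" if x: "x \<in> P" for x
  proof -
    have "?w' x = rnd \<alpha> (marg f {y \<in> P. before xs y x} x)"
      using reorder_preds_kept[OF ro[folded P_def] PA x]
      by (simp add: ord_weight_def S' P_def[symmetric])
    moreover have "?w x \<le> rnd \<alpha> (marg f {y \<in> P. before xs y x} x)"
      by (rule ord_weight_antimono[OF ms al]) (use x SG d in \<open>auto simp: P_def\<close>)
    ultimately show ?thesis by simp
  qed
  have "potential f \<alpha> (S, xs) = (\<Sum>x\<in>P. (?w x)\<^sup>2) + loss f \<alpha> S xs B"
  proof -
    have "S = P \<union> B" "P \<inter> B = {}" using BS P_def by auto
    then show ?thesis using potential_eq[OF ord SG] loss fin by (simp add: sum.union_disjoint)
  qed
  moreover have "potential f \<alpha> (S', xs') = (\<Sum>x\<in>P. (?w' x)\<^sup>2) + gain f \<alpha> S xs A B"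
  proof -
    have "S' \<subseteq> G" using S'I IG by auto
    then show ?thesis using potential_eq[OF ord', of S'] PA fin gain new
      unfolding S' P_def[symmetric] by (simp add: sum.union_disjoint)
  qed
  moreover have "(\<Sum>x\<in>P. (?w x)\<^sup>2) \<le> (\<Sum>x\<in>P. (?w' x)\<^sup>2)"
  proof (rule sum_mono)
    fix x assume x: "x \<in> P"
    have "0 \<le> ?w x" by (rule ord_weight_nonneg[OF ms al]) (use x SG in \<open>auto simp: P_def\<close>)
    with kept[OF x] show "(?w x)\<^sup>2 \<le> (?w' x)\<^sup>2" by (rule power_mono)
  qed
  moreover have "0 < \<alpha>" using gap al by (cases "\<alpha> = 0") auto
  ultimately show ?thesis using S'I ord' gap by linarith
qed

lemma ord_weight_sum_upper:
  assumes ms: "monotone_submodular G f" and al: "0 \<le> \<alpha>" and ord: "is_order G xs"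
    and TG: "T \<subseteq> G" and DG: "D \<subseteq> G"
  shows "(\<Sum>a\<in>D. ord_weight f \<alpha> T D xs a) \<le> f (T \<union> D) - f T"
proof -
  have "(\<Sum>a\<in>D. ord_weight f \<alpha> T D xs a) \<le> (\<Sum>a\<in>D. marg f (T \<union> {y \<in> D. before xs y a}) a)"
    unfolding ord_weight_def using TG DG by (intro sum_mono rnd_le[OF al] marg_nonneg[OF ms]) auto
  also have "\<dots> = f (T \<union> D) - f T"
    using ord DG by (intro marg_telescope_ordered) (auto simp: is_order_def)
  finally show ?thesis .
qed

text \<open>Conversely, each weight loses at most alpha to rounding.  For alpha = 0 all weights
  vanish, which is harmless only when singletons add no value.\<close>
lemma ord_weight_sum_lower:
  assumes ms: "monotone_submodular G f" and al: "0 \<le> \<alpha>" and ord: "is_order G xs"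
    and TG: "T \<subseteq> G" and DG: "D \<subseteq> G" and TD: "T \<inter> D = {}"
    and zero: "\<alpha> = 0 \<Longrightarrow> \<forall>e\<in>G. f {e} \<le> f {}"
  shows "f (T \<union> D) - f T \<le> (\<Sum>a\<in>D. ord_weight f \<alpha> T D xs a) + real (card D) * \<alpha>"
proof -
  have d: "distinct xs" using ord by (simp add: is_order_def)
  have "f (T \<union> D) - f T = (\<Sum>a\<in>D. marg f (T \<union> {y \<in> D. before xs y a}) a)"
    using ord DG by (intro marg_telescope_ordered[symmetric]) (auto simp: is_order_def)
  also have "\<dots> \<le> (\<Sum>a\<in>D. ord_weight f \<alpha> T D xs a + \<alpha>)"
  proof (rule sum_mono)
    fix a assume aD: "a \<in> D"
    show "marg f (T \<union> {y \<in> D. before xs y a}) a \<le> ord_weight f \<alpha> T D xs a + \<alpha>"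
    proof (cases "\<alpha> = 0")
      case True
      have "marg f (T \<union> {y \<in> D. before xs y a}) a \<le> f {a} - f {}"
        using aD TG DG TD before_irrefl[OF d, of a] by (intro marg_le_single[OF ms]) auto
      also have "\<dots> \<le> 0" using zero[OF True] aD DG by auto
      finally show ?thesis using True by (simp add: ord_weight_def)
    next
      case False
      then show ?thesis using al rnd_ge[of \<alpha>] by (simp add: ord_weight_def algebra_simps)
    qed
  qed
  also have "\<dots> = (\<Sum>a\<in>D. ord_weight f \<alpha> T D xs a) + real (card D) * \<alpha>"
    by (simp add: sum.distrib)
  finally show ?thesis .
qed

text \<open>A replacement that inserts A \<subseteq> D can only be credited more than the weights of A
  in the full sequential insertion of D on top of S: each a \<in> A then sees fewer
  predecessors.\<close>
lemma gain_ge_ord_weights: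
  assumes ms: "monotone_submodular G f" and al: "0 \<le> \<alpha>" and ord: "is_order G xs"
    and SG: "S \<subseteq> G" and DG: "D \<subseteq> G" and SD: "S \<inter> D = {}" and AD: "A \<subseteq> D"
  shows "(\<Sum>a\<in>A. (ord_weight f \<alpha> S D xs a)\<^sup>2) \<le> gain f \<alpha> S xs A B"
proof -
  have d: "distinct xs" using ord by (simp add: is_order_def)
  have "gain f \<alpha> S xs A B = (\<Sum>a\<in>A. (ord_weight f \<alpha> (S - B) A xs a)\<^sup>2)"
    using ord AD DG by (intro gain_eq) (auto simp: is_order_def)
  moreover have "(ord_weight f \<alpha> S D xs a)\<^sup>2 \<le> (ord_weight f \<alpha> (S - B) A xs a)\<^sup>2" if a: "a \<in> A" for a
  proof (rule power_mono)
    show "0 \<le> ord_weight f \<alpha> S D xs a"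
      by (rule ord_weight_nonneg[OF ms al SG DG]) (use a AD DG in auto)
    show "ord_weight f \<alpha> S D xs a \<le> ord_weight f \<alpha> (S - B) A xs a"
      unfolding ord_weight_def[of f \<alpha> "S - B"]
      by (rule ord_weight_antimono[OF ms al _ SG DG _ _ d]) (use a AD DG SD in auto)
  qed
  ultimately show ?thesis by (simp add: sum_mono)
qed

text \<open>Up to k sets of size at most k through a common point cover at most
  k^2 - k + 1 points; this is why replacements may remove k^2 - k + 1 elements.\<close>
lemma card_UN_through_point:
  assumes finT: "finite T" and cardT: "card T \<le> k"
    and Y: "\<And>a. a \<in> T \<Longrightarrow> finite (Y a) \<and> b \<in> Y a \<and> card (Y a) \<le> k"
  shows "card (\<Union>a\<in>T. Y a) \<le> k\<^sup>2 - k + 1"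
proof -
  define U where "U = (\<Union>a\<in>T. Y a - {b})"
  have finU: "finite U" using finT Y by (auto simp: U_def)
  have "card (\<Union>a\<in>T. Y a) \<le> card (insert b U)"
    using finU by (intro card_mono) (auto simp: U_def)
  also have "\<dots> \<le> Suc (card U)" using finU by (simp add: card_insert_if)
  also have "card U \<le> (\<Sum>a\<in>T. card (Y a - {b}))" unfolding U_def using finT by (rule card_UN_le)
  also have "\<dots> \<le> (\<Sum>a\<in>T. k - 1)"
    using Y by (intro sum_mono) (simp add: card_Diff_singleton diff_le_mono)
  also have "\<dots> \<le> k * (k - 1)" using cardT by simp
  also have "k * (k - 1) = k\<^sup>2 - k" by (simp add: power2_eq_square right_diff_distrib')
  finally show ?thesis by simp
qed

lemma sum_UN_le_nonneg:
  fixes g :: "'b \<Rightarrow> real"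
  assumes "finite J" "\<And>j. j \<in> J \<Longrightarrow> finite (A j)" "\<And>x. x \<in> (\<Union>j\<in>J. A j) \<Longrightarrow> 0 \<le> g x"
  shows "sum g (\<Union>j\<in>J. A j) \<le> (\<Sum>j\<in>J. sum g (A j))"
  using assms
proof (induction J rule: finite_induct)
  case empty
  then show ?case by simp
next
  case (insert j J)
  have fin: "finite (\<Union>i\<in>J. A i)" "finite (A j)" using insert by auto
  have "0 \<le> sum g (A j \<inter> (\<Union>i\<in>J. A i))" using insert.prems(2) by (intro sum_nonneg) auto
  then have "sum g (A j \<union> (\<Union>i\<in>J. A i)) \<le> sum g (A j) + sum g (\<Union>i\<in>J. A i)"
    using sum_Un[OF fin(2) fin(1), of g] by linarith
  then show ?case using insert by simp
qed

lemma twice_sum_le_of_sq_bound: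
  fixes u W :: "'b \<Rightarrow> real"
  assumes fin: "finite T" and wb: "0 \<le> wb" and u: "\<And>a. a \<in> T \<Longrightarrow> 0 \<le> u a"
    and W: "\<And>a. a \<in> T \<Longrightarrow> 0 \<le> W a"
    and sq: "(\<Sum>a\<in>T. (u a)\<^sup>2) \<le> wb\<^sup>2 + (\<Sum>a\<in>T. wb * (W a - wb))"
  shows "2 * (\<Sum>a\<in>T. u a) \<le> wb + (\<Sum>a\<in>T. W a)"
proof (cases "wb = 0")
  case True
  then have "(\<Sum>a\<in>T. (u a)\<^sup>2) = 0" using sq by (simp add: antisym sum_nonneg)
  then have "\<forall>a\<in>T. u a = 0" using sum_nonneg_eq_0_iff[OF fin, of "\<lambda>a. (u a)\<^sup>2"] by simp
  moreover have "0 \<le> (\<Sum>a\<in>T. W a)" using W by (simp add: sum_nonneg)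
  ultimately show ?thesis using True by simp
next
  case False
  then have wp: "0 < wb" using wb by simp
  have "(\<Sum>a\<in>T. 2 * wb * u a - wb\<^sup>2) \<le> (\<Sum>a\<in>T. (u a)\<^sup>2)"
  proof (rule sum_mono)
    fix a
    show "2 * wb * u a - wb\<^sup>2 \<le> (u a)\<^sup>2"
      using zero_le_power2[of "u a - wb"] by (simp add: power2_diff algebra_simps)
  qed
  also note sq
  finally have "2 * wb * (\<Sum>a\<in>T. u a) \<le> wb\<^sup>2 + wb * (\<Sum>a\<in>T. W a)"
    by (simp add: sum_subtractf sum_distrib_left right_diff_distrib power2_eq_square mult.assoc)
  then have "wb * (2 * (\<Sum>a\<in>T. u a)) \<le> wb * (wb + (\<Sum>a\<in>T. W a))"
    by (simp add: algebra_simps power2_eq_square)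
  then show ?thesis using wp by (simp add: mult_le_cancel_left_pos)
qed

text \<open>The estimate for one star: elements a \<in> T whose exchange sets Y a all contain b,
  where b has maximal weight in each Y a.\<close>
lemma star_inequality:
  fixes w :: "'b \<Rightarrow> real" and u :: "'c \<Rightarrow> real" and Y :: "'c \<Rightarrow> 'b set"
  assumes finT: "finite T" and wb: "0 \<le> w b"
    and Y: "\<And>a. a \<in> T \<Longrightarrow> finite (Y a) \<and> b \<in> Y a"
    and w: "\<And>a x. a \<in> T \<Longrightarrow> x \<in> Y a \<Longrightarrow> 0 \<le> w x \<and> w x \<le> w b"
    and u: "\<And>a. a \<in> T \<Longrightarrow> 0 \<le> u a"
    and sq: "(\<Sum>a\<in>T. (u a)\<^sup>2) \<le> (\<Sum>x\<in>(\<Union>a\<in>T. Y a). (w x)\<^sup>2)"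
  shows "2 * (\<Sum>a\<in>T. u a) \<le> w b + (\<Sum>a\<in>T. \<Sum>x\<in>Y a. w x)"
proof (rule twice_sum_le_of_sq_bound[OF finT wb u])
  show "0 \<le> (\<Sum>x\<in>Y a. w x)" if "a \<in> T" for a using that w by (simp add: sum_nonneg)
  define U where "U = (\<Union>a\<in>T. Y a - {b})"
  have finU: "finite U" using finT Y by (auto simp: U_def)
  note sq
  also have "(\<Sum>x\<in>(\<Union>a\<in>T. Y a). (w x)\<^sup>2) \<le> (\<Sum>x\<in>insert b U. (w x)\<^sup>2)"
    using finU by (intro sum_mono2) (auto simp: U_def)
  also have "\<dots> \<le> (w b)\<^sup>2 + (\<Sum>x\<in>U. (w x)\<^sup>2)"
    using finU by (simp add: sum.insert_if)
  also have "(\<Sum>x\<in>U. (w x)\<^sup>2) \<le> (\<Sum>a\<in>T. \<Sum>x\<in>Y a - {b}. (w x)\<^sup>2)"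
    unfolding U_def using finT Y by (intro sum_UN_le_nonneg) auto
  also have "\<dots> \<le> (\<Sum>a\<in>T. w b * ((\<Sum>x\<in>Y a. w x) - w b))"
  proof (rule sum_mono)
    fix a assume a: "a \<in> T"
    have "(\<Sum>x\<in>Y a - {b}. (w x)\<^sup>2) \<le> (\<Sum>x\<in>Y a - {b}. w b * w x)"
      using w[OF a] by (intro sum_mono) (simp add: power2_eq_square mult_right_mono)
    also have "\<dots> = w b * ((\<Sum>x\<in>Y a. w x) - w b)"
      using Y[OF a] by (simp add: sum_distrib_left[symmetric] sum_diff1)
    finally show "(\<Sum>x\<in>Y a - {b}. (w x)\<^sup>2) \<le> w b * ((\<Sum>x\<in>Y a. w x) - w b)" .
  qed
  finally show "(\<Sum>a\<in>T. (u a)\<^sup>2) \<le> (w b)\<^sup>2 + (\<Sum>a\<in>T. w b * ((\<Sum>x\<in>Y a. w x) - w b))"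
    by simp
qed

lemma sum_multicover_le:
  fixes w :: "'b \<Rightarrow> real"
  assumes finD: "finite D" and finX: "finite X" and YX: "\<And>a. a \<in> D \<Longrightarrow> Y a \<subseteq> X"
    and deg: "\<And>x. x \<in> X \<Longrightarrow> card {a \<in> D. x \<in> Y a} \<le> k"
    and w: "\<And>x. x \<in> X \<Longrightarrow> 0 \<le> w x"
  shows "(\<Sum>a\<in>D. \<Sum>x\<in>Y a. w x) \<le> real k * (\<Sum>x\<in>X. w x)"
proof -
  have "(\<Sum>a\<in>D. \<Sum>x\<in>Y a. w x) = (\<Sum>a\<in>D. \<Sum>x\<in>{x \<in> X. x \<in> Y a}. w x)"
    using YX by (intro sum.cong refl arg_cong[where f="\<lambda>Z. sum w Z"]) blast
  also have "\<dots> = (\<Sum>x\<in>X. \<Sum>a\<in>{a \<in> D. x \<in> Y a}. w x)"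
    by (rule sum.swap_restrict[OF finD finX])
  also have "\<dots> \<le> (\<Sum>x\<in>X. real k * w x)"
    using deg w by (intro sum_mono) (simp add: mult_right_mono)
  also have "\<dots> = real k * (\<Sum>x\<in>X. w x)" by (simp add: sum_distrib_left)
  finally show ?thesis .
qed

section \<open>The exchange argument at a local optimum\<close>

lemma k_exchange_map:
  assumes kex: "k_exchange_system G I k" and A: "A \<in> I" and B: "B \<in> I"
  obtains Y :: "'a \<Rightarrow> 'a set" where
    "\<And>e. e \<in> A - B \<Longrightarrow> Y e \<subseteq> B - A \<and> card (Y e) \<le> k"
    "\<And>x. x \<in> B - A \<Longrightarrow> card {e \<in> A - B. x \<in> Y e} \<le> k"
    "\<And>C. C \<subseteq> A - B \<Longrightarrow> (B - (\<Union>e\<in>C. Y e)) \<union> C \<in> I"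
proof -
  have "\<forall>A\<in>I. \<forall>B\<in>I. \<exists>Y :: 'a \<Rightarrow> 'a set.
        (\<forall>e\<in>A - B. Y e \<subseteq> B - A \<and> card (Y e) \<le> k) \<and>
        (\<forall>x\<in>B - A. card {e \<in> A - B. x \<in> Y e} \<le> k) \<and>
        (\<forall>C. C \<subseteq> A - B \<longrightarrow> (B - (\<Union>e\<in>C. Y e)) \<union> C \<in> I)"
    using kex unfolding k_exchange_system_def by (elim conjE) assumption
  from bspec[OF bspec[OF this A] B] obtain Y :: "'a \<Rightarrow> 'a set" where
      Y: "(\<forall>e\<in>A - B. Y e \<subseteq> B - A \<and> card (Y e) \<le> k) \<and>
       (\<forall>x\<in>B - A. card {e \<in> A - B. x \<in> Y e} \<le> k) \<and>
       (\<forall>C. C \<subseteq> A - B \<longrightarrow> (B - (\<Union>e\<in>C. Y e)) \<union> C \<in> I)"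
    by blast
  show thesis
  proof (rule that)
    show "Y e \<subseteq> B - A \<and> card (Y e) \<le> k" if "e \<in> A - B" for e using Y that by blast
    show "card {e \<in> A - B. x \<in> Y e} \<le> k" if "x \<in> B - A" for x using Y that by blast
    show "(B - (\<Union>e\<in>C. Y e)) \<union> C \<in> I" if "C \<subseteq> A - B" for C using Y that by blast
  qed
qed

context
  fixes G :: "'a set" and I :: "'a set set" and k :: nat and f :: "'a set \<Rightarrow> real"
    and \<alpha> :: real and S Opt :: "'a set" and xs :: "'a list" and Y :: "'a \<Rightarrow> 'a set"
  assumes k1: "1 \<le> k" and IG: "I \<subseteq> Pow G" and ms: "monotone_submodular G f"
    and al: "0 \<le> \<alpha>" and SI: "S \<in> I" and OG: "Opt \<subseteq> G" and ord: "is_order G xs"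
    and locopt: "\<And>A B. k_replacement G I k S A B \<Longrightarrow> gain f \<alpha> S xs A B \<le> loss f \<alpha> S xs B"
    and Y_sub: "\<And>e. e \<in> Opt - S \<Longrightarrow> Y e \<subseteq> S - Opt \<and> card (Y e) \<le> k"
    and Y_deg: "\<And>x. x \<in> S - Opt \<Longrightarrow> card {e \<in> Opt - S. x \<in> Y e} \<le> k"
    and Y_exch: "\<And>C. C \<subseteq> Opt - S \<Longrightarrow> (S - (\<Union>e\<in>C. Y e)) \<union> C \<in> I"
begin

abbreviation sol_weight :: "'a \<Rightarrow> real" where
  "sol_weight \<equiv> ord_weight f \<alpha> {} S xs"

abbreviation opt_weight :: "'a \<Rightarrow> real" where
  "opt_weight \<equiv> ord_weight f \<alpha> S (Opt - S) xs"

lemma SG: "S \<subseteq> G"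
  using SI IG by auto

lemma finite_ground: "finite G"
  using ord by (auto simp: is_order_def)

lemma sol_weight_nonneg: "x \<in> S \<Longrightarrow> 0 \<le> sol_weight x"
  using SG by (intro ord_weight_nonneg[OF ms al]) auto

lemma opt_weight_nonneg: "a \<in> Opt - S \<Longrightarrow> 0 \<le> opt_weight a"
  using SG OG by (intro ord_weight_nonneg[OF ms al]) auto

lemma loss_subset: "B \<subseteq> S \<Longrightarrow> loss f \<alpha> S xs B = (\<Sum>x\<in>B. (sol_weight x)\<^sup>2)"
  using ord SG loss_eq[of xs S f \<alpha> B] by (simp add: is_order_def Int_absorb1)

lemma gain_lower: "A \<subseteq> Opt - S \<Longrightarrow> (\<Sum>a\<in>A. (opt_weight a)\<^sup>2) \<le> gain f \<alpha> S xs A B"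
  using SG OG by (intro gain_ge_ord_weights[OF ms al ord]) auto

text \<open>An element of Opt - S with empty exchange set can simply be added, so local
  optimality forces its weight to vanish.\<close>
lemma opt_weight_unpartnered:
  assumes a: "a \<in> Opt - S" and Ya: "Y a = {}"
  shows "opt_weight a \<le> 0"
proof -
  have "(S - {}) \<union> {a} \<in> I" using Y_exch[of "{a}"] a Ya by simp
  then have "k_replacement G I k S {a} {}" unfolding k_replacement_def using a OG k1 by auto
  then have "gain f \<alpha> S xs {a} {} \<le> loss f \<alpha> S xs {}" by (rule locopt)
  moreover have "(opt_weight a)\<^sup>2 \<le> gain f \<alpha> S xs {a} {}" using gain_lower[of "{a}" "{}"] a by simp
  moreover have "loss f \<alpha> S xs {} = 0" using loss_subset[of "{}"] by simp
  ultimately have "(opt_weight a)\<^sup>2 \<le> 0" by linarith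
  then show ?thesis by simp
qed

text \<open>A star T of elements of Opt - S whose exchange sets all contain a common partner
  b of maximal weight can be swapped in for the union of the exchange sets.\<close>
lemma star_bound:
  assumes b: "b \<in> S - Opt" and T: "T \<subseteq> Opt - S"
    and star: "\<And>a. a \<in> T \<Longrightarrow> b \<in> Y a \<and> (\<forall>x\<in>Y a. sol_weight x \<le> sol_weight b)"
  shows "2 * (\<Sum>a\<in>T. opt_weight a) \<le> sol_weight b + (\<Sum>a\<in>T. \<Sum>x\<in>Y a. sol_weight x)"
proof -
  define B where "B = (\<Union>a\<in>T. Y a)"
  have finS: "finite S" and finT: "finite T"
    using SG OG T finite_ground by (auto intro: finite_subset)
  have Y: "finite (Y a) \<and> Y a \<subseteq> S" if "a \<in> T" for a
    using Y_sub that T finS by (auto intro: finite_subset)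
  have cardT: "card T \<le> k"
  proof -
    have "T \<subseteq> {e \<in> Opt - S. b \<in> Y e}" using T star by auto
    then have "card T \<le> card {e \<in> Opt - S. b \<in> Y e}"
      using OG finite_ground by (intro card_mono) (auto intro: finite_subset)
    then show ?thesis using Y_deg[OF b] by simp
  qed
  have "k_replacement G I k S T B"
    unfolding k_replacement_def
  proof (intro conjI)
    show "B \<subseteq> S" using Y by (auto simp: B_def)
    then show "T \<subseteq> G - (S - B)" using T OG by blast
    show "card T \<le> k" by (rule cardT)
    show "card B \<le> k\<^sup>2 - k + 1"
    proof (unfold B_def, rule card_UN_through_point[OF finT cardT])
      fix a assume a: "a \<in> T"
      then have "a \<in> Opt - S" using T by blast
      then show "finite (Y a) \<and> b \<in> Y a \<and> card (Y a) \<le> k"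
        using Y[OF a] star[OF a] Y_sub by blast
    qed
    show "(S - B) \<union> T \<in> I" unfolding B_def using T by (rule Y_exch)
  qed
  then have "gain f \<alpha> S xs T B \<le> loss f \<alpha> S xs B" by (rule locopt)
  moreover have "loss f \<alpha> S xs B = (\<Sum>x\<in>B. (sol_weight x)\<^sup>2)"
    using Y by (intro loss_subset) (auto simp: B_def)
  ultimately have sq: "(\<Sum>a\<in>T. (opt_weight a)\<^sup>2) \<le> (\<Sum>x\<in>B. (sol_weight x)\<^sup>2)"
    using gain_lower[OF T, of B] by linarith
  show ?thesis
  proof (rule star_inequality[OF finT])
    show "0 \<le> sol_weight b" using b sol_weight_nonneg by auto
    show "finite (Y a) \<and> b \<in> Y a" if "a \<in> T" for a using Y[OF that] star[OF that] by blast
    show "0 \<le> sol_weight x \<and> sol_weight x \<le> sol_weight b" if a: "a \<in> T" and x: "x \<in> Y a" for a x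
    proof
      show "0 \<le> sol_weight x" using Y[OF a] x by (intro sol_weight_nonneg) blast
      show "sol_weight x \<le> sol_weight b" using star[OF a] x by blast
    qed
    show "0 \<le> opt_weight a" if "a \<in> T" for a using T that by (intro opt_weight_nonneg) blast
    show "(\<Sum>a\<in>T. (opt_weight a)\<^sup>2) \<le> (\<Sum>x\<in>(\<Union>a\<in>T. Y a). (sol_weight x)\<^sup>2)"
      using sq by (simp add: B_def)
  qed
qed

text \<open>Grouping Opt - S into stars around a maximal-weight partner and charging every
  point of S at most k times yields the key inequality of the analysis.\<close>
lemma exchange_bound:
  "2 * (\<Sum>a\<in>Opt - S. opt_weight a) \<le> (real k + 1) * (\<Sum>x\<in>S. sol_weight x)"
proof -
  define D where "D = {a \<in> Opt - S. Y a \<noteq> {}}"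
  have finS: "finite S" and finD: "finite D" and finO: "finite (Opt - S)"
    using SG OG finite_ground by (auto simp: D_def intro: finite_subset)
  have YD: "Y a \<subseteq> S - Opt" "finite (Y a)" if "a \<in> D" for a
  proof -
    show "Y a \<subseteq> S - Opt" using Y_sub that by (simp add: D_def)
    then show "finite (Y a)" using finS by (meson Diff_subset finite_subset)
  qed
  have "\<forall>a\<in>D. \<exists>c. c \<in> Y a \<and> (\<forall>x\<in>Y a. sol_weight x \<le> sol_weight c)"
  proof
    fix a assume "a \<in> D"
    have fin: "finite (sol_weight ` Y a)" "sol_weight ` Y a \<noteq> {}"
      using YD \<open>a \<in> D\<close> D_def by auto
    obtain c where "c \<in> Y a" "sol_weight c = Max (sol_weight ` Y a)" using Max_in[OF fin] by auto
    then show "\<exists>c. c \<in> Y a \<and> (\<forall>x\<in>Y a. sol_weight x \<le> sol_weight c)"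
      using Max_ge[OF fin(1)] by auto
  qed
  then have "\<exists>c. \<forall>a\<in>D. c a \<in> Y a \<and> (\<forall>x\<in>Y a. sol_weight x \<le> sol_weight (c a))"
    by (rule bchoice)
  then obtain c where c: "\<forall>a\<in>D. c a \<in> Y a \<and> (\<forall>x\<in>Y a. sol_weight x \<le> sol_weight (c a))"
    by blast
  have c_img: "c ` D \<subseteq> S - Opt" using c YD by blast
  have finSO: "finite (S - Opt)" using finS by simp
  let ?star = "\<lambda>b. {a \<in> D. c a = b}" and ?W = "\<lambda>a. \<Sum>x\<in>Y a. sol_weight x"
  have charging: "(\<Sum>a\<in>D. ?W a) \<le> real k * (\<Sum>x\<in>S - Opt. sol_weight x)"
  proof (rule sum_multicover_le[OF finD finSO YD(1)])
    show "card {a \<in> D. x \<in> Y a} \<le> k" if "x \<in> S - Opt" for x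
    proof -
      have "finite {e \<in> Opt - S. x \<in> Y e}" by (rule finite_subset[OF _ finO]) auto
      then have "card {a \<in> D. x \<in> Y a} \<le> card {e \<in> Opt - S. x \<in> Y e}"
        by (rule card_mono) (auto simp: D_def)
      then show ?thesis using Y_deg[OF that] by simp
    qed
    show "0 \<le> sol_weight x" if "x \<in> S - Opt" for x using that sol_weight_nonneg by auto
  qed
  have "(\<Sum>a\<in>Opt - S. opt_weight a) \<le> (\<Sum>a\<in>D. opt_weight a)"
  proof -
    have "D \<subseteq> Opt - S" by (auto simp: D_def)
    then have "(\<Sum>a\<in>Opt - S. opt_weight a) = (\<Sum>a\<in>(Opt - S) - D. opt_weight a) + (\<Sum>a\<in>D. opt_weight a)"
      using finO by (rule sum.subset_diff)
    moreover have "(\<Sum>a\<in>(Opt - S) - D. opt_weight a) \<le> 0"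
      by (intro sum_nonpos opt_weight_unpartnered) (auto simp: D_def)
    ultimately show ?thesis by simp
  qed
  also have "(\<Sum>a\<in>D. opt_weight a) = (\<Sum>b\<in>S - Opt. \<Sum>a\<in>?star b. opt_weight a)"
    by (rule sum.group[OF finD finSO c_img, symmetric])
  finally have "2 * (\<Sum>a\<in>Opt - S. opt_weight a) \<le> (\<Sum>b\<in>S - Opt. 2 * (\<Sum>a\<in>?star b. opt_weight a))"
    unfolding sum_distrib_left[symmetric] by simp
  also have "\<dots> \<le> (\<Sum>b\<in>S - Opt. sol_weight b + (\<Sum>a\<in>?star b. ?W a))"
  proof (rule sum_mono)
    fix b assume b: "b \<in> S - Opt"
    show "2 * (\<Sum>a\<in>?star b. opt_weight a) \<le> sol_weight b + (\<Sum>a\<in>?star b. ?W a)"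
      by (rule star_bound[OF b]) (use c in \<open>auto simp: D_def\<close>)
  qed
  also have "\<dots> = (\<Sum>b\<in>S - Opt. sol_weight b) + (\<Sum>a\<in>D. ?W a)"
    by (simp add: sum.distrib sum.group[OF finD finSO c_img])
  also have "\<dots> \<le> (\<Sum>b\<in>S - Opt. sol_weight b) + real k * (\<Sum>x\<in>S - Opt. sol_weight x)"
    using charging by simp
  also have "(\<Sum>b\<in>S - Opt. sol_weight b) + real k * (\<Sum>x\<in>S - Opt. sol_weight x)
      = (real k + 1) * (\<Sum>x\<in>S - Opt. sol_weight x)"
    by (simp add: algebra_simps)
  also have "\<dots> \<le> (real k + 1) * (\<Sum>x\<in>S. sol_weight x)"
    using finS sol_weight_nonneg by (intro mult_left_mono sum_mono2) auto
  finally show ?thesis .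
qed
end

lemma local_optimum_approx:
  assumes k1: "1 \<le> k" and kex: "k_exchange_system G I k" and ms: "monotone_submodular G f"
    and al: "0 \<le> \<alpha>" and SI: "S \<in> I" and ord: "is_order G xs"
    and locopt: "\<And>A B. k_replacement G I k S A B \<Longrightarrow> gain f \<alpha> S xs A B \<le> loss f \<alpha> S xs B"
    and OI: "Opt \<in> I" and zero: "\<alpha> = 0 \<Longrightarrow> \<forall>e\<in>G. f {e} \<le> f {}"
  shows "f Opt \<le> f S + (real k + 1) / 2 * (f S - f {}) + real (card G) * \<alpha>"
proof -
  have IG: "I \<subseteq> Pow G" using kex by (simp add: k_exchange_system_def)
  have SG: "S \<subseteq> G" and OG: "Opt \<subseteq> G" using SI OI IG by auto
  have finG: "finite G" using ord by (auto simp: is_order_def)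
  obtain Y :: "'a \<Rightarrow> 'a set" where
      Y_sub: "\<And>e. e \<in> Opt - S \<Longrightarrow> Y e \<subseteq> S - Opt \<and> card (Y e) \<le> k"
    and Y_deg: "\<And>x. x \<in> S - Opt \<Longrightarrow> card {e \<in> Opt - S. x \<in> Y e} \<le> k"
    and Y_exch: "\<And>C. C \<subseteq> Opt - S \<Longrightarrow> (S - (\<Union>e\<in>C. Y e)) \<union> C \<in> I"
    using k_exchange_map[OF kex OI SI] by blast
  let ?w = "ord_weight f \<alpha> {} S xs" and ?u = "ord_weight f \<alpha> S (Opt - S) xs"
  have mono: "f Opt \<le> f (S \<union> (Opt - S))"
    using SG OG by (intro ms_mono[OF ms]) auto
  have "f (S \<union> (Opt - S)) - f S \<le> (\<Sum>a\<in>Opt - S. ?u a) + real (card (Opt - S)) * \<alpha>"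
    using SG OG by (intro ord_weight_sum_lower[OF ms al ord _ _ _ zero]) auto
  moreover have "real (card (Opt - S)) * \<alpha> \<le> real (card G) * \<alpha>"
    using card_mono[OF finG, of "Opt - S"] OG al by (intro mult_right_mono) auto
  moreover have "2 * (\<Sum>a\<in>Opt - S. ?u a) \<le> (real k + 1) * (\<Sum>x\<in>S. ?w x)"
    by (rule exchange_bound[OF k1 IG ms al SI OG ord locopt Y_sub Y_deg Y_exch])
  moreover have "(real k + 1) * (\<Sum>x\<in>S. ?w x) \<le> (real k + 1) * (f S - f {})"
    using ord_weight_sum_upper[OF ms al ord _ SG, of "{}"] by (intro mult_left_mono) auto
  ultimately show ?thesis using mono by (simp add: field_simps)
qed

section \<open>Cost of one iteration\<close>

lemma card_small_subsets:
  assumes "finite G" "card G \<ge> 1"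
  shows "card {A. A \<subseteq> G \<and> card A \<le> j} \<le> (j + 1) * card G ^ j"
proof -
  have eq: "{A. A \<subseteq> G \<and> card A \<le> j} = (\<Union>i\<in>{..j}. {A. A \<subseteq> G \<and> card A = i})" by auto
  have "card {A. A \<subseteq> G \<and> card A \<le> j} \<le> (\<Sum>i\<in>{..j}. card {A. A \<subseteq> G \<and> card A = i})"
    unfolding eq by (rule card_UN_le) simp
  also have "\<dots> = (\<Sum>i\<in>{..j}. card G choose i)" using n_subsets[OF assms(1)] by simp
  also have "\<dots> \<le> (\<Sum>i\<in>{..j}. card G ^ j)"
  proof (rule sum_mono)
    fix i assume "i \<in> {..j}"
    have "card G choose i \<le> card G ^ i"
      by (cases "i \<le> card G") (auto simp: binomial_le_pow binomial_eq_0)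
    also have "\<dots> \<le> card G ^ j" using \<open>i \<in> {..j}\<close> assms(2) by (simp add: power_increasing)
    finally show "card G choose i \<le> card G ^ j" .
  qed
  also have "\<dots> = (j + 1) * card G ^ j" by simp
  finally show ?thesis .
qed

text \<open>The constant in the per-iteration cost: there are at most
  (k+1)(k^2-k+2) |G|^(k^2+1) candidate pairs, each charged 2(k + (k^2-k+1) + 2)
  operations, plus a linear overhead.\<close>
definition iter_const :: "nat \<Rightarrow> nat" where
  "iter_const k = 3 + (k + 1) * (k\<^sup>2 - k + 2) * (2 * (k + (k\<^sup>2 - k + 1) + 2))"

lemma iter_cost_bound:
  assumes fin: "finite G" and n1: "card G \<ge> 1" and k1: "k \<ge> 1" and SG: "S \<subseteq> G"
  shows "iter_cost G k S \<le> iter_const k * card G ^ (k\<^sup>2 + 1)"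
proof -
  let ?K = "k\<^sup>2 - k + 1" and ?n = "card G"
  let ?c = "2 * (k + ?K + 2)"
  let ?small = "\<lambda>j. {A. A \<subseteq> G \<and> card A \<le> j}"
  have sub: "candidates G k S \<subseteq> ?small k \<times> ?small ?K"
    unfolding candidates_def using SG by auto
  have finC: "finite (?small k \<times> ?small ?K)" using fin by auto
  have cc: "card (candidates G k S) \<le> ((k + 1) * ?n ^ k) * ((?K + 1) * ?n ^ ?K)"
  proof -
    have "card (candidates G k S) \<le> card (?small k \<times> ?small ?K)" by (rule card_mono[OF finC sub])
    also have "\<dots> \<le> ((k + 1) * ?n ^ k) * ((?K + 1) * ?n ^ ?K)"
      unfolding card_cartesian_product by (intro mult_le_mono card_small_subsets fin n1)
    finally show ?thesis .
  qed
  have "(\<Sum>(A, B)\<in>candidates G k S. 2 * (card A + card B + 2)) \<le> (\<Sum>p\<in>candidates G k S. ?c)"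
    by (rule sum_mono) (auto simp: candidates_def)
  then have scan: "(\<Sum>(A, B)\<in>candidates G k S. 2 * (card A + card B + 2)) \<le> card (candidates G k S) * ?c"
    by simp
  have "k + ?K = k\<^sup>2 + 1" using k1 by (simp add: power2_eq_square)
  then have pw: "?n ^ k * ?n ^ ?K = ?n ^ (k\<^sup>2 + 1)" by (metis power_add)
  define X where "X = (k + 1) * (?K + 1) * ?c"
  define N where "N = ?n ^ (k\<^sup>2 + 1)"
  have "card (candidates G k S) * ?c \<le> ((k + 1) * ?n ^ k) * ((?K + 1) * ?n ^ ?K) * ?c"
    using cc by (rule mult_le_mono1)
  also have "\<dots> = X * (?n ^ k * ?n ^ ?K)"
    unfolding X_def by (simp only: mult_ac)
  finally have cand: "card (candidates G k S) * ?c \<le> X * N"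
    unfolding pw N_def .
  have cS: "card S \<le> ?n" using card_mono[OF fin SG] .
  have "iter_cost G k S \<le> ?n + ?n + 1 + X * N"
    unfolding iter_cost_def using cS scan cand by linarith
  also have "\<dots> \<le> (3 + X) * N"
  proof -
    have "?n \<le> N" "1 \<le> N" using n1 by (simp_all add: N_def self_le_power)
    then show ?thesis by (simp add: algebra_simps)
  qed
  also have "3 + X = iter_const k" unfolding iter_const_def X_def by simp
  finally show ?thesis unfolding N_def .
qed

definition cost_const :: "nat \<Rightarrow> real" where
  "cost_const k = 1 + real (iter_const k) + real (iter_const k) * (real k + 5)\<^sup>2"

lemma total_cost_arith:
  fixes n m :: nat and \<epsilon> c :: real
  assumes n1: "1 \<le> n" and k1: "1 \<le> k" and eps: "0 < \<epsilon>" "\<epsilon> < 1"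
    and c: "c \<le> (real m + 1) * (real (iter_const k) * real n ^ (k\<^sup>2 + 1))"
    and iters: "real m * \<epsilon>\<^sup>2 \<le> real n ^ 3 * (real k + 5)\<^sup>2"
  shows "real n + c \<le> cost_const k * real k ^ 2 * real n ^ (k ^ 2 + 4) / \<epsilon> ^ 2"
proof -
  define Kc where "Kc = real (iter_const k)"
  define N1 where "N1 = real n ^ (k\<^sup>2 + 1)"
  define N4 where "N4 = real n ^ (k\<^sup>2 + 4)"
  have nr: "1 \<le> real n" using n1 by simp
  have "k\<^sup>2 + 4 = 3 + (k\<^sup>2 + 1)" by simp
  then have N4eq: "N4 = real n ^ 3 * N1" unfolding N4_def N1_def by (simp only: power_add)
  have N1ge: "1 \<le> N1" unfolding N1_def using nr by (rule one_le_power)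
  have nN4: "real n \<le> N4"
    using power_increasing[of 1 "k\<^sup>2 + 4" "real n"] nr unfolding N4_def by simp
  have N1N4: "N1 \<le> N4" unfolding N4eq using N1ge nr by (simp add: mult_le_cancel_right1)
  have e2: "\<epsilon>\<^sup>2 \<le> 1" "0 < \<epsilon>\<^sup>2" using eps by (simp_all add: power_le_one)
  have Kc: "0 \<le> Kc" by (simp add: Kc_def)
  have "(real n + c) * \<epsilon>\<^sup>2 \<le> real n * \<epsilon>\<^sup>2 + Kc * N1 * \<epsilon>\<^sup>2 + Kc * N1 * (real m * \<epsilon>\<^sup>2)"
    using mult_right_mono[OF c, of "\<epsilon>\<^sup>2"] e2 by (simp add: Kc_def N1_def algebra_simps)
  also have "\<dots> \<le> N4 + Kc * N4 + Kc * (real k + 5)\<^sup>2 * N4"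
  proof -
    have "real n * \<epsilon>\<^sup>2 \<le> N4" using mult_left_mono[OF e2(1), of "real n"] nN4 by simp
    moreover have "Kc * N1 * \<epsilon>\<^sup>2 \<le> Kc * N4"
      using mult_left_mono[OF e2(1), of "Kc * N1"] N1N4 Kc N1ge
      by (simp add: mult_left_mono order_trans)
    moreover have "Kc * N1 * (real m * \<epsilon>\<^sup>2) \<le> Kc * N1 * (real n ^ 3 * (real k + 5)\<^sup>2)"
      using iters Kc N1ge by (intro mult_left_mono) auto
    ultimately show ?thesis unfolding N4eq by (simp add: algebra_simps)
  qed
  also have "\<dots> = cost_const k * N4" by (simp add: cost_const_def Kc_def algebra_simps)
  also have "\<dots> \<le> cost_const k * real k ^ 2 * N4"
  proof -
    have "0 \<le> cost_const k * N4" by (simp add: cost_const_def N4_def)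
    moreover have "1 \<le> real k ^ 2" using k1 by simp
    ultimately have "cost_const k * N4 * 1 \<le> cost_const k * N4 * real k ^ 2"
      by (rule mult_left_mono[rotated])
    then show ?thesis by (simp add: mult_ac)
  qed
  finally show ?thesis using e2 by (simp add: N4_def pos_le_divide_eq)
qed

lemma ls_delta_pos: "0 < \<epsilon> \<Longrightarrow> 0 < ls_delta k \<epsilon>"
  by (simp add: ls_delta_def add_pos_pos)

text \<open>delta is of order epsilon / k, which bounds the number of iterations.\<close>
lemma ls_delta_lower:
  assumes "0 < \<epsilon>" "\<epsilon> < 1"
  shows "\<epsilon> / (real k + 5) \<le> ls_delta k \<epsilon>"
proof -
  have "\<epsilon> * (1 + (real k + 3) / (2 * \<epsilon>)) = \<epsilon> + (real k + 3) / 2"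
    using assms by (simp add: field_simps)
  also have "\<dots> \<le> real k + 5"
  proof -
    have "(real k + 3) / 2 \<le> real k + 4" by (simp add: divide_le_eq)
    then show ?thesis using assms by linarith
  qed
  finally have "1 + (real k + 3) / (2 * \<epsilon>) \<le> (real k + 5) / \<epsilon>"
    using assms by (simp add: field_simps)
  then show ?thesis using assms unfolding ls_delta_def by (simp add: field_simps)
qed

text \<open>delta is chosen so that an additive error delta f(e0) against a
  (k+3)/2-approximation of f(e0) itself is at most epsilon times the solution value.\<close>
lemma ls_delta_absorb:
  assumes eps: "0 < \<epsilon>" and bound: "f0 \<le> (real k + 3) / 2 * F + ls_delta k \<epsilon> * f0"
  shows "ls_delta k \<epsilon> * f0 \<le> \<epsilon> * F"
proof -
  define q where "q = (real k + 3) / (2 * \<epsilon>)"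
  have q: "0 < q" using eps by (simp add: q_def)
  have "1 - ls_delta k \<epsilon> = q * ls_delta k \<epsilon>" using q by (simp add: ls_delta_def q_def field_simps)
  moreover have "(real k + 3) / 2 = q * \<epsilon>" using eps by (simp add: q_def)
  moreover have "(1 - ls_delta k \<epsilon>) * f0 = f0 - ls_delta k \<epsilon> * f0" by (simp add: algebra_simps)
  then have "(1 - ls_delta k \<epsilon>) * f0 \<le> (real k + 3) / 2 * F" using bound by linarith
  ultimately have "q * (ls_delta k \<epsilon> * f0) \<le> q * (\<epsilon> * F)" by (simp add: mult.assoc)
  then show ?thesis using q by simp
qed

lemma no_step_locally_optimal:
  assumes ord: "is_order G xs" and SG: "S \<subseteq> G"
    and final: "\<nexists>t. ls_step G I f k \<alpha> (S, xs) t" and kr: "k_replacement G I k S A B"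
  shows "gain f \<alpha> S xs A B \<le> loss f \<alpha> S xs B"
proof (rule ccontr)
  assume "\<not> gain f \<alpha> S xs A B \<le> loss f \<alpha> S xs B"
  then have "loss f \<alpha> S xs B < gain f \<alpha> S xs A B" by simp
  moreover have "A \<subseteq> G - (S - B)" using kr unfolding k_replacement_def by blast
  then have "reorder_ok xs (filter (\<lambda>x. x \<in> S - B) xs @ filter (\<lambda>x. x \<notin> S - B) xs) (S - B) A"
    using ord SG by (intro reorder_exists) (auto simp: is_order_def)
  ultimately have "ls_step G I f k \<alpha> (S, xs)
      ((S - B) \<union> A, filter (\<lambda>x. x \<in> S - B) xs @ filter (\<lambda>x. x \<notin> S - B) xs)"
    unfolding ls_step_def fst_conv snd_conv using kr by blast
  then show False using final by blast
qed

locale ls_run =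
  fixes G :: "'a set" and I :: "'a set set" and f :: "'a set \<Rightarrow> real" and k :: nat
    and \<epsilon> :: real and e0 :: 'a and xs0 :: "'a list" and s :: "nat \<Rightarrow> 'a set \<times> 'a list"
    and m :: nat
  assumes k1: "1 \<le> k" and eps: "0 < \<epsilon>" "\<epsilon> < 1" and fin: "finite G"
    and kex: "k_exchange_system G I k" and singletons: "\<forall>e\<in>G. {e} \<in> I"
    and ms: "monotone_submodular G f" and e0G: "e0 \<in> G" and e0_max: "\<forall>e\<in>G. f {e} \<le> f {e0}"
    and ord0: "is_order G xs0" and start: "s 0 = ({e0}, xs0)"
    and steps: "\<forall>i<m. ls_step G I f k (ls_alpha G f k \<epsilon> e0) (s i) (s (Suc i))"
begin

abbreviation \<alpha> :: real where "\<alpha> \<equiv> ls_alpha G f k \<epsilon> e0"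

lemma IG: "I \<subseteq> Pow G"
  using kex by (simp add: k_exchange_system_def)

lemma card_ge1: "1 \<le> card G"
  using fin e0G by (simp add: Suc_le_eq card_gt_0_iff) blast

lemma f0_nonneg: "0 \<le> f {e0}"
  using ms_nonneg[OF ms] e0G by simp

lemma alpha_nonneg: "0 \<le> \<alpha>"
  unfolding ls_alpha_def using f0_nonneg ls_delta_pos[OF eps(1), of k]
  by (intro divide_nonneg_nonneg mult_nonneg_nonneg) auto

lemma run_invariant:
  "i \<le> m \<Longrightarrow> fst (s i) \<in> I \<and> is_order G (snd (s i)) \<and>
     potential f \<alpha> (s 0) + real i * \<alpha>\<^sup>2 \<le> potential f \<alpha> (s i)"
proof (induction i)
  case 0
  then show ?case using start singletons e0G ord0 by simp
next
  case (Suc i)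
  then have IH: "fst (s i) \<in> I" "is_order G (snd (s i))"
      "potential f \<alpha> (s 0) + real i * \<alpha>\<^sup>2 \<le> potential f \<alpha> (s i)" by simp_all
  have "ls_step G I f k \<alpha> (fst (s i), snd (s i)) (fst (s (Suc i)), snd (s (Suc i)))"
    using steps Suc.prems by simp
  from ls_step_potential[OF ms alpha_nonneg IG IH(1,2) this] IH(3)
  show ?case by (simp add: algebra_simps)
qed

text \<open>The potential starts at least at 0 and never exceeds |G| f(e0)^2, so at most
  |G|^3 / delta^2 \<le> |G|^3 (k+5)^2 / epsilon^2 improving steps are possible.\<close>
lemma iteration_count: "real m * \<epsilon>\<^sup>2 \<le> real (card G) ^ 3 * (real k + 5)\<^sup>2"
proof (cases "m = 0")
  case False
  let ?n = "real (card G)" and ?\<delta> = "ls_delta k \<epsilon>"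
  have n1: "1 \<le> ?n" using card_ge1 by simp
  have "ls_step G I f k \<alpha> ({e0}, xs0) (fst (s (Suc 0)), snd (s (Suc 0)))"
    using steps False start by (metis prod.collapse zero_less_iff_neq_zero)
  then have "0 < \<alpha>"
    using ls_step_potential[OF ms alpha_nonneg IG _ ord0] singletons e0G by blast
  then have f0: "0 < f {e0}" using f0_nonneg by (cases "f {e0} = 0") (auto simp: ls_alpha_def)
  have inv: "fst (s m) \<in> I" "is_order G (snd (s m))"
      "potential f \<alpha> (s 0) + real m * \<alpha>\<^sup>2 \<le> potential f \<alpha> (s m)"
    using run_invariant[of m] by simp_all
  have "0 \<le> potential f \<alpha> (s 0)"
    using potential_bounds[OF ms alpha_nonneg _ fin ord0 e0_max] start e0G by simp
  moreover have "potential f \<alpha> (fst (s m), snd (s m)) \<le> ?n * (f {e0})\<^sup>2"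
    using potential_bounds[OF ms alpha_nonneg _ fin inv(2) e0_max, of "fst (s m)"] inv(1) IG
    by blast
  ultimately have "real m * (f {e0} * ?\<delta> / ?n)\<^sup>2 \<le> ?n * (f {e0})\<^sup>2"
    using inv(3) by (simp add: ls_alpha_def)
  then have "real m * ?\<delta>\<^sup>2 * (f {e0})\<^sup>2 \<le> ?n ^ 3 * (f {e0})\<^sup>2"
    using n1 by (simp add: power_divide power_mult_distrib field_simps power2_eq_square power3_eq_cube)
  then have m\<delta>: "real m * ?\<delta>\<^sup>2 \<le> ?n ^ 3" using f0 by simp
  have "(\<epsilon> / (real k + 5))\<^sup>2 \<le> ?\<delta>\<^sup>2"
    using ls_delta_lower[OF eps] eps by (intro power_mono) auto
  then have "real m * (\<epsilon> / (real k + 5))\<^sup>2 \<le> ?n ^ 3"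
    using m\<delta> mult_left_mono[of _ _ "real m"] by (meson of_nat_0_le_iff order_trans)
  then show ?thesis by (simp add: power_divide field_simps)
qed simp

lemma total_cost:
  "real (card G) + (\<Sum>i\<le>m. real (iter_cost G k (fst (s i))))
     \<le> cost_const k * real k ^ 2 * real (card G) ^ (k ^ 2 + 4) / \<epsilon> ^ 2"
proof (rule total_cost_arith[OF card_ge1 k1 eps _ iteration_count])
  have "real (iter_cost G k (fst (s i))) \<le> real (iter_const k) * real (card G) ^ (k\<^sup>2 + 1)"
    if "i \<le> m" for i
  proof -
    have "fst (s i) \<subseteq> G" using run_invariant[OF that] IG by auto
    then have "iter_cost G k (fst (s i)) \<le> iter_const k * card G ^ (k\<^sup>2 + 1)"
      by (rule iter_cost_bound[OF fin card_ge1 k1])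
    then show ?thesis by (metis of_nat_le_iff of_nat_mult of_nat_power)
  qed
  then have "(\<Sum>i\<le>m. real (iter_cost G k (fst (s i))))
      \<le> (\<Sum>i\<le>m. real (iter_const k) * real (card G) ^ (k\<^sup>2 + 1))"
    by (intro sum_mono) simp
  then show "(\<Sum>i\<le>m. real (iter_cost G k (fst (s i))))
      \<le> (real m + 1) * (real (iter_const k) * real (card G) ^ (k\<^sup>2 + 1))"
    by (simp add: add.commute)
qed

lemma terminal_approximation:
  assumes final: "\<nexists>t. ls_step G I f k \<alpha> (s m) t"
  shows "fst (s m) \<in> I \<and> (\<forall>Opt\<in>I. f Opt \<le> ((real k + 3) / 2 + \<epsilon>) * f (fst (s m)))"
proof -
  define S where "S = fst (s m)"
  define xs where "xs = snd (s m)"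
  let ?\<delta> = "ls_delta k \<epsilon>"
  have SI: "S \<in> I" and ord: "is_order G xs" using run_invariant[of m] by (simp_all add: S_def xs_def)
  have SG: "S \<subseteq> G" using SI IG by auto
  have fe: "0 \<le> f {}" using ms_nonneg[OF ms] by simp
  have nal: "real (card G) * \<alpha> = ?\<delta> * f {e0}" using card_ge1 by (simp add: ls_alpha_def)
  have zero: "\<forall>e\<in>G. f {e} \<le> f {}" if "\<alpha> = 0"
  proof -
    have "f {e0} = 0" using that card_ge1 ls_delta_pos[OF eps(1), of k] by (simp add: ls_alpha_def)
    then show ?thesis using e0_max fe by force
  qed
  have locopt: "gain f \<alpha> S xs A B \<le> loss f \<alpha> S xs B" if "k_replacement G I k S A B" for A B
    using no_step_locally_optimal[OF ord SG _ that] final by (simp add: S_def xs_def)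
  have approx: "f Opt \<le> (real k + 3) / 2 * f S + ?\<delta> * f {e0}" if "Opt \<in> I" for Opt
  proof -
    have "f Opt \<le> f S + (real k + 1) / 2 * (f S - f {}) + real (card G) * \<alpha>"
      by (rule local_optimum_approx[OF k1 kex ms alpha_nonneg SI ord locopt that zero])
    moreover have "(real k + 1) / 2 * (f S - f {}) \<le> (real k + 1) / 2 * f S"
      using fe by (intro mult_left_mono) auto
    ultimately show ?thesis using nal by (simp add: field_simps)
  qed
  have absorb: "?\<delta> * f {e0} \<le> \<epsilon> * f S"
    using approx[of "{e0}"] singletons e0G by (intro ls_delta_absorb[OF eps(1)]) auto
  have "f Opt \<le> ((real k + 3) / 2 + \<epsilon>) * f S" if "Opt \<in> I" for Opt
    using approx[OF that] absorb by (simp add: algebra_simps)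
  then show ?thesis using SI unfolding S_def by blast
qed

end

lemma cost_const_pos: "0 < cost_const k"
  by (simp add: cost_const_def add_pos_nonneg)

theorem mainTheorem6:
  fixes k :: nat
  assumes "k \<ge> 1"
  shows "\<exists>C>0. \<forall>(G :: 'a set) I f \<epsilon> e0 xs0 (s :: nat \<Rightarrow> 'a set \<times> 'a list) m.
     0 < \<epsilon> \<and> \<epsilon> < 1 \<and> finite G \<and> k_exchange_system G I k \<and>
     (\<forall>e\<in>G. {e} \<in> I) \<and> monotone_submodular G f \<and>
     e0 \<in> G \<and> (\<forall>e\<in>G. f {e} \<le> f {e0}) \<and> is_order G xs0 \<and>
     s 0 = ({e0}, xs0) \<and>
     (\<forall>i<m. ls_step G I f k (ls_alpha G f k \<epsilon> e0) (s i) (s (Suc i)))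
     \<longrightarrow>
       real (card G) + (\<Sum>i\<le>m. real (iter_cost G k (fst (s i))))
          \<le> C * real k ^ 2 * real (card G) ^ (k ^ 2 + 4) / \<epsilon> ^ 2
     \<and> ((\<nexists>t. ls_step G I f k (ls_alpha G f k \<epsilon> e0) (s m) t) \<longrightarrow>
          fst (s m) \<in> I \<and>
          (\<forall>Opt\<in>I. f Opt \<le> ((real k + 3) / 2 + \<epsilon>) * f (fst (s m))))"
proof (intro exI[of _ "cost_const k"] conjI[OF cost_const_pos] allI impI, goal_cases)
  case (1 G I f \<epsilon> e0 xs0 s m)
  interpret run: ls_run G I f k \<epsilon> e0 xs0 s m
    by (rule ls_run.intro) (use 1 assms in auto)
  show ?case using run.total_cost run.terminal_approximation by blast
qed

end
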